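(* Let the data $S_0\supset\cdots\supset S_m$, $\delta$, $\kappa$, $T$ be as in the definition of a truncatable function $\psi$ below, let $(\epsilon_s)_{s\ge0}$ be a positive strictly decreasing sequence with $\epsilon_s\le\delta$ for all $s$, and let $c_0,\dots,c_m\in\mathbb{N}$ be counters. Consider the following truncation procedure applied to a point $\tilde x\in\mathbb{R}^n$: repeat { find the unique $i$ with $\tilde x\in S_i\setminus S_{i+1}$ (where $S_{m+1}=\emptyset$); if $\Gamma(\tilde x)<\epsilon_{c_i}$, set $\tilde x\leftarrow T(\tilde x,\epsilon_{c_i})$ and $c_i\leftarrow c_i+1$; otherwise stop }. Then this procedure terminates after at most $m$ applications of $T$.
   Context: $\psi=f+\varphi$ with $f:\mathbb{R}^n\to\mathbb{R}$ continuously differentiable and $\varphi:\mathbb{R}^n\to\mathbb{R}$ convex. For $x\in\mathbb{R}^n$ and $\|d\|=1$ let $\Gamma_{\max}(x,d)=\sup\{T>0: t\mapsto\psi(x+td)\text{ is continuously differentiable on }(0,T)\}$ and $\Gamma(x)=\inf_{\|d\|=1}\Gamma_{\max}(x,d)$. $\psi$ can be truncated if there exist sets $\mathbb{R}^n=S_0\supset S_1\supset\cdots\supset S_m$, $\delta\in(0,+\infty]$, $\kappa>0$, and $T:\mathbb{R}^n\times(0,\delta]\to\mathbb{R}^n$ such that (i) $\Gamma(x)\ge\delta$ for all $x\in S_m$; (ii) for any $a\in(0,\delta]$ and $x\in S_i\setminus S_{i+1}$, $i\in\{0,\dots,m-1\}$: if $\Gamma(x)\ge a$ then $T(x,a)=x$;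 otherwise $T(x,a)\in S_{i+1}$, $\Gamma(T(x,a))\ge a$ and $\|T(x,a)-x\|\le\kappa a$. *)

theory Defs
  imports "HOL-Analysis.Analysis"
begin

definition C1_on_UNIV :: "('a::euclidean_space \<Rightarrow> real) \<Rightarrow> bool" where
  "C1_on_UNIV f \<longleftrightarrow> (\<exists>f' :: 'a \<Rightarrow> ('a \<Rightarrow>\<^sub>L real).
      (\<forall>x. (f has_derivative blinfun_apply (f' x)) (at x)) \<and> continuous_on UNIV f')"

definition Gamma_max :: "('a::euclidean_space \<Rightarrow> real) \<Rightarrow> 'a \<Rightarrow> 'a \<Rightarrow> ereal" where
  "Gamma_max \<psi> x d = Sup {ereal T | T. T > 0 \<and>
       (\<lambda>t. \<psi> (x + t *\<^sub>R d)) C1_differentiable_on {0<..<T}}"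

definition Gamma :: "('a::euclidean_space \<Rightarrow> real) \<Rightarrow> 'a \<Rightarrow> ereal" where
  "Gamma \<psi> x = Inf {Gamma_max \<psi> x d | d. norm d = 1}"

definition truncatable ::
  "('a::euclidean_space \<Rightarrow> real) \<Rightarrow> (nat \<Rightarrow> 'a set) \<Rightarrow> nat \<Rightarrow> ereal \<Rightarrow> real \<Rightarrow> ('a \<Rightarrow> real \<Rightarrow> 'a) \<Rightarrow> bool"
  where
  "truncatable \<psi> S m \<delta> \<kappa> T \<longleftrightarrow>
     S 0 = UNIV \<and> (\<forall>i<m. S (Suc i) \<subseteq> S i) \<and>
     0 < \<delta> \<and> \<kappa> > 0 \<and>
     (\<forall>x\<in>S m. Gamma \<psi> x \<ge> \<delta>) \<and>
     (\<forall>a. 0 < a \<and> ereal a \<le> \<delta> \<longrightarrow>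
        (\<forall>i<m. \<forall>x \<in> S i - S (Suc i).
           (Gamma \<psi> x \<ge> ereal a \<longrightarrow> T x a = x) \<and>
           (\<not> Gamma \<psi> x \<ge> ereal a \<longrightarrow>
               T x a \<in> S (Suc i) \<and> Gamma \<psi> (T x a) \<ge> ereal a \<and>
               norm (T x a - x) \<le> \<kappa> * a)))"

definition Sext :: "(nat \<Rightarrow> 'a set) \<Rightarrow> nat \<Rightarrow> nat \<Rightarrow> 'a set" where
  "Sext S m i = (if i \<le> m then S i else {})"

definition level :: "(nat \<Rightarrow> 'a set) \<Rightarrow> nat \<Rightarrow> 'a \<Rightarrow> nat" where
  "level S m x = (THE i. x \<in> Sext S m i - Sext S m (Suc i))"

definition trunc_step ::
  "('a::euclidean_space \<Rightarrow> real) \<Rightarrow> (nat \<Rightarrow> 'a set) \<Rightarrow> nat \<Rightarrow> ('a \<Rightarrow> real \<Rightarrow> 'a) \<Rightarrow> (nat \<Rightarrow> real)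
    \<Rightarrow> 'a \<times> (nat \<Rightarrow> nat) \<Rightarrow> 'a \<times> (nat \<Rightarrow> nat)" where
  "trunc_step \<psi> S m T \<epsilon> st =
     (let x = fst st; c = snd st; i = level S m x in
        (T x (\<epsilon> (c i)), c(i := c i + 1)))"

definition trunc_stop ::
  "('a::euclidean_space \<Rightarrow> real) \<Rightarrow> (nat \<Rightarrow> 'a set) \<Rightarrow> nat \<Rightarrow> (nat \<Rightarrow> real)
    \<Rightarrow> 'a \<times> (nat \<Rightarrow> nat) \<Rightarrow> bool" where
  "trunc_stop \<psi> S m \<epsilon> st =
     (let x = fst st; c = snd st; i = level S m x in
        \<not> (Gamma \<psi> x < ereal (\<epsilon> (c i))))"

end

theory Submission
  imports Defs
begin

text \<open>The level of a point is the largest index of the chain containing it. A step of the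
  truncation loop that does not stop moves the point strictly deeper into the chain: at the
  bottom level m we have Gamma \<ge> \<delta> \<ge> \<epsilon>, so the loop stops there, and at a lower level the
  truncation map lands in the next set of the chain. Since levels range over 0..m, the loop
  stops after at most m steps.\<close>

lemma iterate_stops_of_bounded_increasing_measure:
  fixes f :: "'s \<Rightarrow> 's" and \<mu> :: "'s \<Rightarrow> nat"
  assumes increasing: "\<And>p. \<not> P p \<Longrightarrow> \<mu> p < \<mu> (f p)"
    and bounded: "\<And>p. \<mu> p \<le> n"
  shows "\<exists>k\<le>n - \<mu> p. P ((f ^^ k) p)"
proof (induction "n - \<mu> p" arbitrary: p rule: less_induct)
  case less
  show ?case
  proof (cases "P p")
    case True
    then show ?thesis by (intro exI[of _ 0]) simp
  next
    case False
    then have "n - \<mu> (f p) < n - \<mu> p"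
      using increasing[of p] bounded[of "f p"] by linarith
    then obtain k where "k \<le> n - \<mu> (f p)" "P ((f ^^ k) (f p))"
      using less by blast
    moreover have "(f ^^ k) (f p) = (f ^^ Suc k) p"
      by (simp only: funpow_Suc_right comp_apply)
    ultimately show ?thesis
      using \<open>n - \<mu> (f p) < n - \<mu> p\<close> by (intro exI[of _ "Suc k"]) auto
  qed
qed

lemma level_eq_Max:
  assumes "S 0 = UNIV" and chain: "\<forall>i<m. S (Suc i) \<subseteq> S i"
  shows "level S m x = Max {j. j \<le> m \<and> x \<in> S j}"
proof -
  define A where "A = {j. j \<le> m \<and> x \<in> S j}"
  have "finite A" "A \<noteq> {}"
    using assms(1) unfolding A_def by auto
  then have Max_in: "Max A \<in> A" and Max_ge: "\<And>j. j \<in> A \<Longrightarrow> j \<le> Max A"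
    by auto
  have antimono: "S j \<subseteq> S i" if "i \<le> j" "j \<le> m" for i j
  proof (rule lift_Suc_antimono_le_ivl[of "{..<m}" S i j])
    show "{i..<j} \<subseteq> {..<m}"
      using that by auto
  qed (use chain that in auto)
  have "Suc (Max A) \<notin> A"
    using Max_ge[of "Suc (Max A)"] by auto
  then have "x \<in> Sext S m (Max A) - Sext S m (Suc (Max A))"
    using Max_in unfolding A_def Sext_def by auto
  moreover have "j = Max A" if j: "x \<in> Sext S m j - Sext S m (Suc j)" for j
  proof -
    from j have "j \<in> A"
      unfolding A_def Sext_def by (auto split: if_splits)
    moreover have "\<not> j < Max A"
    proof
      assume "j < Max A"
      then have "x \<in> Sext S m (Suc j)"
        using Max_in antimono[of "Suc j" "Max A"] unfolding A_def Sext_def by auto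
      with j show False by blast
    qed
    ultimately show ?thesis
      using Max_ge by fastforce
  qed
  ultimately show ?thesis
    unfolding level_def A_def[symmetric] by (rule the_equality)
qed

context
  fixes S :: "nat \<Rightarrow> 'a set" and m :: nat
  assumes S0: "S 0 = UNIV" and chain: "\<forall>i<m. S (Suc i) \<subseteq> S i"
begin

private lemma level_candidates:
  "finite {j. j \<le> m \<and> x \<in> S j}" "{j. j \<le> m \<and> x \<in> S j} \<noteq> {}"
  using S0 by auto

lemma level_le: "level S m x \<le> m"
  using Max_in[OF level_candidates] by (auto simp: level_eq_Max[OF S0 chain])

lemma mem_level: "x \<in> S (level S m x)"
  using Max_in[OF level_candidates] by (auto simp: level_eq_Max[OF S0 chain])

lemma le_level: "j \<le> m \<Longrightarrow> x \<in> S j \<Longrightarrow> j \<le> level S m x"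
  using level_candidates by (auto simp: level_eq_Max[OF S0 chain])

end

lemma level_trunc_step_gt:
  assumes trunc: "truncatable \<psi> S m \<delta> \<kappa> T"
    and \<epsilon>_pos: "\<forall>s. 0 < \<epsilon> s" and \<epsilon>_le: "\<forall>s. ereal (\<epsilon> s) \<le> \<delta>"
    and running: "\<not> trunc_stop \<psi> S m \<epsilon> (x, c)"
  shows "level S m x < level S m (fst (trunc_step \<psi> S m T \<epsilon> (x, c)))"
proof -
  have S0: "S 0 = UNIV" and chain: "\<forall>i<m. S (Suc i) \<subseteq> S i"
    using trunc unfolding truncatable_def by auto
  define i where "i = level S m x"
  define a where "a = \<epsilon> (c i)"
  have Gamma_lt: "Gamma \<psi> x < ereal a"
    using running unfolding trunc_stop_def a_def i_def Let_def by simp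
  have "i < m"
  proof (rule ccontr)
    assume "\<not> i < m"
    then have "x \<in> S m"
      using level_le[OF S0 chain, of x] mem_level[OF S0 chain, of x] unfolding i_def by simp
    then have "\<delta> \<le> Gamma \<psi> x"
      using trunc unfolding truncatable_def by auto
    with Gamma_lt \<epsilon>_le show False
      unfolding a_def by (meson order.trans not_le)
  qed
  moreover have "x \<in> S i - S (Suc i)"
    using mem_level[OF S0 chain, of x] le_level[OF S0 chain, of "Suc i" x] \<open>i < m\<close>
    unfolding i_def by auto
  ultimately have "T x a \<in> S (Suc i)"
    using trunc Gamma_lt \<epsilon>_pos \<epsilon>_le unfolding truncatable_def a_def by (auto simp: not_le)
  then have "Suc i \<le> level S m (T x a)"
    using le_level[OF S0 chain] \<open>i < m\<close> by simp
  then show ?thesis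
    unfolding trunc_step_def a_def i_def Let_def by simp
qed

theorem lemma3p1:
  fixes \<psi> :: "'a::euclidean_space \<Rightarrow> real"
    and S :: "nat \<Rightarrow> 'a set" and m :: nat and \<delta> :: ereal and \<kappa> :: real
    and T :: "'a \<Rightarrow> real \<Rightarrow> 'a" and \<epsilon> :: "nat \<Rightarrow> real"
    and x0 :: 'a and c0 :: "nat \<Rightarrow> nat"
  assumes "\<exists>f \<phi>. C1_on_UNIV f \<and> convex_on UNIV \<phi> \<and> \<psi> = (\<lambda>x. f x + \<phi> x)"
    and "truncatable \<psi> S m \<delta> \<kappa> T"
    and "\<forall>s. 0 < \<epsilon> s"
    and "\<forall>s t. s < t \<longrightarrow> \<epsilon> t < \<epsilon> s"
    and "\<forall>s. ereal (\<epsilon> s) \<le> \<delta>"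
  shows "\<exists>k\<le>m. trunc_stop \<psi> S m \<epsilon> ((trunc_step \<psi> S m T \<epsilon> ^^ k) (x0, c0))"
proof -
  have S0: "S 0 = UNIV" and chain: "\<forall>i<m. S (Suc i) \<subseteq> S i"
    using assms(2) unfolding truncatable_def by auto
  have "\<exists>k\<le>m - level S m x0. trunc_stop \<psi> S m \<epsilon> ((trunc_step \<psi> S m T \<epsilon> ^^ k) (x0, c0))"
  proof (rule iterate_stops_of_bounded_increasing_measure[where \<mu> = "\<lambda>p. level S m (fst p)",
        of _ _ m "(x0, c0)", simplified])
    show "level S m (fst p) < level S m (fst (trunc_step \<psi> S m T \<epsilon> p))"
      if "\<not> trunc_stop \<psi> S m \<epsilon> p" for p
      using level_trunc_step_gt[OF assms(2,3,5), of "fst p" "snd p"] that by simp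
    show "level S m (fst p) \<le> m" for p
      using level_le[OF S0 chain] .
  qed
  then show ?thesis
    by (meson diff_le_self order.trans)
qed

end
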